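(* In the setting below, for all $k,\ell\in\mathbb{N}_0$, \[ G_{k\ell}=\sum_{n\in\mathbb{N}_0}H_{kn}\,\rho^{-n}L_{n\ell}\,\rho^{\ell}, \] that is, $G=HV^{-1}LV$ as (densely defined) operators on $\ell^2(\mathbb{N}_0)$.
   Context: $T\colon[-1,1]\to[-1,1]$ is an analytic full branch map: there are closed intervals $I_1,\dots,I_d$ with disjoint interiors covering $[-1,1]$ such that $T|_{\mathrm{int}(I_\ell)}$ is an analytic diffeomorphism with $\overline{T(I_\ell)}=[-1,1]$; the inverse branches $\varphi_\ell$ extend to bounded holomorphic functions on $D_R=\{|z|<R\}$ with $\bigcup_\ell\varphi_\ell(D_R)\subseteq D_r$, $1<r<R$. The transfer operator is $(\mathcal{L}f)(z)=\sum_\ell\sigma_\ell\varphi_\ell'(z)f(\varphi_\ell(z))$ with $\sigma_\ell=\mathrm{sgn}(\varphi_\ell'(0))$; it satisfies $\int_{-1}^1g(T(x))f(x)\,dx=\int_{-1}^1g(x)(\mathcal{L}f)(x)\,dx$. Fix $\rho\in(r,R)$; $H^2(D_\rho)$ is the Hardy space on $D_\rho$ with inner product $(f,g)=\lim_{s\uparrow\rho}\frac1{2\pi}\int_0^{2\pi}f(se^{it})\overline{g(se^{it})}dt$ and orthonormal basis $e_n(z)=(z/\rho)^n$. Define $L_{k\ell}=(\mathcal{L}e_\ell,e_k)$, $H_{k\ell}=\frac12\int_{-1}^1x^kx^\ell dx$, $G_{k\ell}=\frac12\int_{-1}^1(T(x))^kx^\ell dx$ for $k,\ell\in\mathbb{N}_0$,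 and the diagonal operators $V\colon(x_n)\mapsto(\rho^nx_n)$, $V^{-1}\colon(x_n)\mapsto(\rho^{-n}x_n)$ on $\ell^2(\mathbb{N}_0)$. *)

theory Defs
  imports "HOL-Complex_Analysis.Complex_Analysis"
begin

definition real_analytic_on :: "(real \<Rightarrow> real) \<Rightarrow> real set \<Rightarrow> bool" where
  "real_analytic_on f S \<longleftrightarrow>
     (\<forall>x\<in>S. \<exists>e>0. \<exists>g. g holomorphic_on ball (complex_of_real x) e \<and>
        (\<forall>y. \<bar>y - x\<bar> < e \<longrightarrow> g (complex_of_real y) = complex_of_real (f y)))"

definition hardy_inner :: "real \<Rightarrow> (complex \<Rightarrow> complex) \<Rightarrow> (complex \<Rightarrow> complex) \<Rightarrow> complex" where
  "hardy_inner \<rho> f g = Lim (at_left \<rho>)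
     (\<lambda>s. complex_of_real (1 / (2 * pi)) *
          integral {0..2*pi} (\<lambda>t. f (complex_of_real s * cis t) * cnj (g (complex_of_real s * cis t))))"

definition hardy_basis :: "real \<Rightarrow> nat \<Rightarrow> complex \<Rightarrow> complex" where
  "hardy_basis \<rho> n z = (z / complex_of_real \<rho>) ^ n"

definition transfer_op :: "nat \<Rightarrow> (nat \<Rightarrow> complex \<Rightarrow> complex) \<Rightarrow> (complex \<Rightarrow> complex) \<Rightarrow> complex \<Rightarrow> complex" where
  "transfer_op d \<phi> f z = (\<Sum>l<d. sgn (deriv (\<phi> l) 0) * deriv (\<phi> l) z * f (\<phi> l z))"

definition Lmat :: "real \<Rightarrow> nat \<Rightarrow> (nat \<Rightarrow> complex \<Rightarrow> complex) \<Rightarrow> nat \<Rightarrow> nat \<Rightarrow> complex" where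
  "Lmat \<rho> d \<phi> k l = hardy_inner \<rho> (transfer_op d \<phi> (hardy_basis \<rho> l)) (hardy_basis \<rho> k)"

definition Hmat :: "nat \<Rightarrow> nat \<Rightarrow> real" where
  "Hmat k l = (1/2) * integral {-1..1} (\<lambda>x::real. x ^ k * x ^ l)"

definition Gmat :: "(real \<Rightarrow> real) \<Rightarrow> nat \<Rightarrow> nat \<Rightarrow> real" where
  "Gmat T k l = (1/2) * integral {-1..1} (\<lambda>x::real. (T x) ^ k * x ^ l)"

end

theory Submission
  imports Defs
begin

text \<open>
  On each branch interval \<open>I\<^sub>j = [a, b]\<close> the inverse branch \<open>\<phi>\<^sub>j\<close> is real on \<open>(-1, 1)\<close>
  with nonvanishing derivative of constant sign \<open>\<sigma>\<^sub>j\<close>, so the substitution \<open>x = \<phi>\<^sub>j(y)\<close> gives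
  \<open>\<integral>\<^bsub>I\<^sub>j\<^esub> g(T x) f(x) dx = \<integral>\<^bsub>[-1,1]\<^esub> g(y) \<sigma>\<^sub>j \<phi>\<^sub>j'(y) f(\<phi>\<^sub>j(y)) dy\<close>.
  Summing over the branches, \<open>\<integral> T(x)\<^sup>k x\<^sup>l dx = \<rho>\<^sup>l \<integral> y\<^sup>k (\<L> e\<^sub>l)(y) dy\<close>.
  By Cauchy's formula on the circles \<open>|z| = s\<close>, \<open>s \<up> \<rho>\<close>, the Hardy coefficient \<open>(f, e\<^sub>n)\<close>
  of a function holomorphic on \<open>D\<^sub>R\<close> is \<open>\<rho>\<^sup>n\<close> times its \<open>n\<close>-th Taylor coefficient, so
  \<open>\<L> e\<^sub>l = \<Sum>\<^sub>n L\<^sub>n\<^sub>l \<rho>\<^sup>-\<^sup>n y\<^sup>n\<close>; as \<open>R > 1\<close> this series converges uniformly on \<open>[-1, 1]\<close>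
  and may be integrated against \<open>y\<^sup>k\<close> term by term.
\<close>

section \<open>Hardy coefficients and Taylor coefficients\<close>

lemma has_integral_circle_Taylor_coeff:
  fixes f :: "complex \<Rightarrow> complex"
  assumes f_holo: "f holomorphic_on ball 0 R" and s: "0 < s" "s < R"
  shows "((\<lambda>t. f (of_real s * cis t) * cnj (cis t) ^ n) has_integral
           of_real (2 * pi * s ^ n) * ((deriv ^^ n) f 0 / fact n)) {0..2*pi}"
proof -
  have "cball 0 s \<subseteq> ball (0::complex) R"
    using s by auto
  then have "((\<lambda>u. f u / (u - 0) ^ Suc n) has_contour_integral (2 * pi * \<i>) / fact n * (deriv ^^ n) f 0)
               (circlepath 0 s)"
    using f_holo s
    by (intro Cauchy_has_contour_integral_higher_derivative_circlepath)
       (auto intro: holomorphic_on_subset holomorphic_on_imp_continuous_on)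
  then have "((\<lambda>t. f (s * cis t) / (s * cis t) ^ Suc n * s * \<i> * cis t) has_integral
               (2 * pi * \<i>) / fact n * (deriv ^^ n) f 0) {0..2*pi}"
    unfolding circlepath_def by (subst (asm) has_contour_integral_part_circlepath_iff) auto
  from has_integral_mult_right[OF this, of "of_real s ^ n / \<i>"]
  show ?thesis
    using s by (simp add: cis_cnj field_simps power_mult_distrib flip: cis_inverse)
qed

lemma hardy_inner_hardy_basis:
  fixes f :: "complex \<Rightarrow> complex"
  assumes f_holo: "f holomorphic_on ball 0 R" and \<rho>: "0 < \<rho>" "\<rho> < R"
  shows "hardy_inner \<rho> f (hardy_basis \<rho> n) = (deriv ^^ n) f 0 / fact n * of_real \<rho> ^ n"
proof -
  define c where "c = (deriv ^^ n) f 0 / fact n"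
  have circle_mean: "complex_of_real (1 / (2 * pi)) *
      integral {0..2*pi} (\<lambda>t. f (of_real s * cis t) * cnj (hardy_basis \<rho> n (of_real s * cis t)))
      = of_real (s\<^sup>2 / \<rho>) ^ n * c" if s: "0 < s" "s < R" for s
  proof -
    have "cnj (hardy_basis \<rho> n (of_real s * cis t)) = of_real (s / \<rho>) ^ n * cnj (cis t) ^ n" for t
      by (simp add: hardy_basis_def power_mult_distrib power_divide)
    then have "((\<lambda>t. f (of_real s * cis t) * cnj (hardy_basis \<rho> n (of_real s * cis t))) has_integral
                 of_real (s / \<rho>) ^ n * (of_real (2 * pi * s ^ n) * c)) {0..2*pi}"
      using has_integral_mult_right[OF has_integral_circle_Taylor_coeff[OF f_holo s], of "of_real (s / \<rho>) ^ n"]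
      by (simp add: c_def mult_ac)
    then show ?thesis
      by (simp add: integral_unique power2_eq_square power_mult_distrib field_simps)
  qed
  have "eventually (\<lambda>s. s \<in> {0<..<\<rho>}) (at_left \<rho>)"
    using \<rho> by (intro eventually_at_left_real) auto
  then have mean_eventually: "eventually (\<lambda>s. of_real (s\<^sup>2 / \<rho>) ^ n * c = complex_of_real (1 / (2 * pi)) *
      integral {0..2*pi} (\<lambda>t. f (of_real s * cis t) * cnj (hardy_basis \<rho> n (of_real s * cis t))))
      (at_left \<rho>)"
    by eventually_elim (use \<rho> circle_mean in auto)
  have "((\<lambda>s. of_real (s\<^sup>2 / \<rho>) ^ n * c) \<longlongrightarrow> of_real (\<rho>\<^sup>2 / \<rho>) ^ n * c) (at_left \<rho>)"
    by (intro tendsto_intros) (use \<rho> in simp)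
  from Lim_transform_eventually[OF this mean_eventually]
  have "hardy_inner \<rho> f (hardy_basis \<rho> n) = of_real (\<rho>\<^sup>2 / \<rho>) ^ n * c"
    unfolding hardy_inner_def by (rule tendsto_Lim[rotated]) (simp add: trivial_limit_at_left_real)
  then show ?thesis
    using \<rho> by (simp add: c_def power2_eq_square)
qed

section \<open>Termwise integration of Taylor series\<close>

lemma summable_norm_Taylor_coeff_ball:
  fixes f :: "complex \<Rightarrow> complex"
  assumes f_holo: "f holomorphic_on ball 0 R" and "norm z < R"
  shows "summable (\<lambda>n. norm ((deriv ^^ n) f 0 / fact n * z ^ n))"
proof -
  define r where "r = (norm z + R) / 2"
  have r: "norm z < r" "r < R"
    using assms(2) by (simp_all add: r_def)
  moreover have "0 < r"
    using r(1) norm_ge_zero[of z] by linarith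
  ultimately have "of_real r \<in> ball (0::complex) R"
    by simp
  then have "summable (\<lambda>n. (deriv ^^ n) f 0 / fact n * of_real r ^ n)"
    using holomorphic_power_series[OF f_holo] by (simp add: sums_iff)
  then show ?thesis
    by (rule powser_insidea) (use r in simp)
qed

lemma uniform_limit_weighted_Taylor_series:
  fixes f :: "complex \<Rightarrow> complex" and g :: "real \<Rightarrow> real"
  assumes f_holo: "f holomorphic_on ball 0 R" and R: "1 < R" and g: "continuous_on {-1..1} g"
  defines "F n x \<equiv> of_real (g x) * ((deriv ^^ n) f 0 / fact n * of_real x ^ n)"
  shows "uniform_limit {-1..1} (\<lambda>N x. \<Sum>n<N. F n x) (\<lambda>x. of_real (g x) * f (of_real x)) sequentially"
proof -
  define c where "c n = (deriv ^^ n) f 0 / fact n" for n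
  obtain B where B: "\<And>x. x \<in> {-1..1} \<Longrightarrow> norm (g x) \<le> B"
    using continuous_on_compact_bound[OF compact_Icc g] by blast
  have "summable (\<lambda>n. norm (c n))"
    using summable_norm_Taylor_coeff_ball[OF f_holo, of 1] R by (simp add: c_def)
  then have "summable (\<lambda>n. B * norm (c n))"
    by (rule summable_mult)
  then have limit: "uniform_limit {-1..1} (\<lambda>N x. \<Sum>n<N. F n x) (\<lambda>x. \<Sum>n. F n x) sequentially"
  proof (rule Weierstrass_m_test[rotated])
    fix n and x :: real assume x: "x \<in> {-1..1}"
    have "norm (F n x) = norm (g x) * norm (c n) * \<bar>x\<bar> ^ n"
      unfolding F_def c_def[symmetric] by (simp add: norm_mult norm_power)
    also have "\<dots> \<le> B * norm (c n) * 1"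
      using x B[OF x] by (intro mult_mono power_le_one) auto
    finally show "norm (F n x) \<le> B * norm (c n)"
      by simp
  qed
  have limit_eq: "(\<Sum>n. F n x) = of_real (g x) * f (of_real x)" if "x \<in> {-1..1}" for x
  proof -
    have "of_real x \<in> ball (0::complex) R"
      using that R by auto
    from sums_mult[OF holomorphic_power_series[OF f_holo this], of "of_real (g x)"]
    show ?thesis
      by (simp add: F_def sums_iff)
  qed
  from limit show ?thesis
    by (rule uniform_limit_cong'[THEN iffD1, rotated 2]) (simp_all add: limit_eq)
qed

lemma sums_integral_power_series:
  fixes f :: "complex \<Rightarrow> complex" and g :: "real \<Rightarrow> real"
  assumes f_holo: "f holomorphic_on ball 0 R" and R: "1 < R" and g: "continuous_on {-1..1} g"
  shows "(\<lambda>n. (deriv ^^ n) f 0 / fact n * of_real (integral {-1..1} (\<lambda>x. g x * x ^ n)))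
           sums integral {-1..1} (\<lambda>x. of_real (g x) * f (of_real x))"
proof -
  define c where "c n = (deriv ^^ n) f 0 / fact n" for n
  define F where "F n = (\<lambda>x. of_real (g x) * (c n * of_real x ^ n))" for n
  obtain I J where
    I: "\<And>N. ((\<lambda>x. \<Sum>n<N. F n x) has_integral I N) {-1..1}" and
    J: "((\<lambda>x. of_real (g x) * f (of_real x)) has_integral J) {-1..1}" and "I \<longlonglongrightarrow> J"
    unfolding F_def c_def
    by (rule uniform_limit_integral[OF uniform_limit_weighted_Taylor_series[OF f_holo R g]])
       (auto intro!: continuous_intros g)
  have F_integral: "(F n has_integral c n * of_real (integral {-1..1} (\<lambda>x. g x * x ^ n))) {-1..1}" for n
  proof -
    have "(\<lambda>x. g x * x ^ n) integrable_on {-1..1}"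
      by (intro integrable_continuous_real continuous_intros g)
    from has_integral_mult_left[OF has_integral_of_real[OF integrable_integral[OF this]], of "c n"]
    show ?thesis
      by (simp add: F_def mult_ac)
  qed
  have "I = (\<lambda>N. \<Sum>n<N. c n * of_real (integral {-1..1} (\<lambda>x. g x * x ^ n)))"
    using has_integral_unique[OF I has_integral_sum[OF finite_lessThan F_integral]] by blast
  then show ?thesis
    using \<open>I \<longlonglongrightarrow> J\<close> integral_unique[OF J] by (simp add: sums_def c_def)
qed

section \<open>Change of variables along an inverse branch\<close>

lemma open_interval_subset_image_if_closure:
  fixes T :: "real \<Rightarrow> real"
  assumes T_cont: "continuous_on {a<..<b} T" and closure_image: "closure (T ` {a..b}) = {c..d}"
  shows "{c<..<d} \<subseteq> T ` {a<..<b}"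
proof -
  define C where "C = closure (T ` {a<..<b})"
  have "convex (T ` {a<..<b})"
    using connected_continuous_image[OF T_cont]
    by (simp add: is_interval_convex_1 flip: is_interval_connected_1)
  then have interior_C: "interior C = interior (T ` {a<..<b})"
    unfolding C_def by (rule convex_interior_closure)
  have "T ` {a..b} \<subseteq> insert (T a) (insert (T b) (T ` {a<..<b}))"
    by (auto simp: le_less)
  then have "{c..d} \<subseteq> insert (T a) (insert (T b) C)"
    unfolding C_def closure_image[symmetric] closure_insert[symmetric] by (rule closure_mono)
  have "{c<..<d} \<subseteq> C"
  proof
    fix y assume "y \<in> {c<..<d}"
    then have "y islimpt {c..d}"
      by (intro interior_limit_point) auto
    then have "y islimpt C"
      using islimpt_subset islimpt_insert \<open>{c..d} \<subseteq> _\<close> by metis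
    then show "y \<in> C"
      unfolding C_def by (meson closed_closure closed_limpt)
  qed
  then have "interior {c<..<d} \<subseteq> interior C"
    by (rule interior_mono)
  then show ?thesis
    using interior_subset[of "T ` {a<..<b}"] by (simp add: interior_C interior_open)
qed

lemma sgn_eq_if_connected_nonzero:
  fixes g :: "'a::topological_space \<Rightarrow> real"
  assumes "connected S" "continuous_on S g" "\<And>y. y \<in> S \<Longrightarrow> g y \<noteq> 0" "x \<in> S" "y \<in> S"
  shows "sgn (g x) = sgn (g y)"
proof (rule ccontr)
  assume "sgn (g x) \<noteq> sgn (g y)"
  then have "min (g x) (g y) \<le> 0" "0 \<le> max (g x) (g y)"
    using assms(3-5) by (auto simp: sgn_if split: if_splits)
  moreover have "is_interval (g ` S)"
    using connected_continuous_image[OF assms(2,1)] by (simp add: is_interval_connected_1)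
  ultimately have "0 \<in> g ` S"
    using assms(4,5) unfolding is_interval_1 by (auto simp: min_def max_def split: if_splits)
  then show False
    using assms(3) by auto
qed

lemma negligible_Int_intervals_if_interiors_disjoint:
  fixes a b c d :: real
  assumes "interior {a..b} \<inter> interior {c..d} = {}"
  shows "negligible ({a..b} \<inter> {c..d})"
proof (rule negligible_subset[of "{a, b, c, d}"])
  show "{a..b} \<inter> {c..d} \<subseteq> {a, b, c, d}"
    using assms by (fastforce simp: less_le)
qed simp

lemma interval_diff_image_left_inverse:
  fixes T u :: "real \<Rightarrow> real"
  assumes T_maps: "T ` {a<..<b} \<subseteq> {c..d}"
    and left_inverse: "\<And>x. x \<in> {a<..<b} \<Longrightarrow> u (T x) = x"
  shows "{a..b} - u ` {c<..<d} \<subseteq> {a, b, u c, u d}"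
proof
  fix x assume x: "x \<in> {a..b} - u ` {c<..<d}"
  show "x \<in> {a, b, u c, u d}"
  proof (cases "x \<in> {a<..<b}")
    case True
    have "T x \<in> {c..d}"
      using True T_maps by blast
    moreover have "T x \<notin> {c<..<d}"
      using x left_inverse[OF True] by (metis DiffD2 image_eqI)
    ultimately have "T x = c \<or> T x = d"
      by auto
    then show ?thesis
      using left_inverse[OF True] by auto
  qed (use x in auto)
qed

lemma has_integral_pullback_left_inverse:
  fixes T u u' g f :: "real \<Rightarrow> real"
  assumes T_maps: "T ` {a<..<b} \<subseteq> {c..d}"
    and T_onto: "{c<..<d} \<subseteq> T ` {a<..<b}"
    and left_inverse: "\<And>x. x \<in> {a<..<b} \<Longrightarrow> u (T x) = x"
    and u_deriv: "\<And>y. y \<in> {c<..<d} \<Longrightarrow> (u has_real_derivative u' y) (at y)"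
    and integrable: "(\<lambda>y. \<bar>u' y\<bar> * g y * f (u y)) absolutely_integrable_on {c..d}"
  shows "((\<lambda>x. g (T x) * f x) has_integral integral {c..d} (\<lambda>y. \<bar>u' y\<bar> * g y * f (u y))) {a..b}"
proof -
  define F where "F = (\<lambda>x. g (T x) * f x)"
  define h where "h = (\<lambda>y. \<bar>u' y\<bar> * g y * f (u y))"
  have right_inverse: "T (u y) = y" "u y \<in> {a<..<b}" if "y \<in> {c<..<d}" for y
    using T_onto that left_inverse by auto
  have u_inj: "inj_on u {c<..<d}"
    by (metis inj_on_inverseI right_inverse(1))
  have u_deriv_within: "(u has_real_derivative u' y) (at y within {c<..<d})" if "y \<in> {c<..<d}" for y
    using u_deriv[OF that] by (rule has_field_derivative_at_within)
  have F_u: "\<bar>u' y\<bar> * F (u y) = h y" if "y \<in> {c<..<d}" for y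
    using right_inverse(1)[OF that] by (simp add: F_def h_def)
  have "h absolutely_integrable_on {c<..<d}"
    using integrable absolutely_integrable_on_open_interval[where f=h and a=c and b=d] by (simp add: h_def)
  then have "(\<lambda>y. \<bar>u' y\<bar> * F (u y)) absolutely_integrable_on {c<..<d}"
    using F_u by (auto intro: absolutely_integrable_spike[OF _ negligible_empty])
  moreover have "integral {c<..<d} (\<lambda>y. \<bar>u' y\<bar> * F (u y)) = integral {c..d} h"
    using integral_cong[of "{c<..<d}", OF F_u] integral_open_interval[where f=h and a=c and b=d] by simp
  ultimately have "F absolutely_integrable_on u ` {c<..<d} \<and> integral (u ` {c<..<d}) F = integral {c..d} h"
    using has_absolute_integral_change_of_variables_1'[OF _ u_deriv_within u_inj, where f=F] by auto
  then have F_integral: "(F has_integral integral {c..d} h) (u ` {c<..<d})"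
    by (metis absolutely_integrable_on_def has_integral_integral)
  have neg_out: "negligible {x \<in> u ` {c<..<d} - {a..b}. F x \<noteq> 0}"
    by (rule empty_imp_negligible) (use right_inverse(2) in fastforce)
  have neg_in: "negligible {x \<in> {a..b} - u ` {c<..<d}. F x \<noteq> 0}"
    using interval_diff_image_left_inverse[OF T_maps left_inverse]
    by (blast intro: negligible_subset[of "{a, b, u c, u d}"])
  show ?thesis
    using has_integral_spike_set_eq[OF neg_out neg_in] F_integral by (simp add: F_def h_def)
qed

definition Re_restrict :: "(complex \<Rightarrow> complex) \<Rightarrow> real \<Rightarrow> real" where
  "Re_restrict \<phi> y = Re (\<phi> (of_real y))"

lemma has_vector_derivative_of_real_holomorphic:
  assumes "\<phi> holomorphic_on A" "open A" "of_real y \<in> A"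
  shows "((\<lambda>t. \<phi> (of_real t)) has_vector_derivative deriv \<phi> (of_real y)) (at y)"
  using holomorphic_derivI[OF assms] by (rule has_vector_derivative_real_field)

lemma has_real_derivative_Re_restrict:
  assumes "\<phi> holomorphic_on A" "open A" "of_real y \<in> A"
  shows "(Re_restrict \<phi> has_real_derivative Re_restrict (deriv \<phi>) y) (at y)"
  using bounded_linear.has_vector_derivative[OF bounded_linear_Re
      has_vector_derivative_of_real_holomorphic[OF assms]]
  by (simp add: Re_restrict_def[abs_def] has_real_derivative_iff_has_vector_derivative)

lemma deriv_in_Reals_if_Reals_on_open:
  assumes "\<phi> holomorphic_on A" "open A" "open U" "of_real ` U \<subseteq> A"
    and real_on_U: "\<And>t. t \<in> U \<Longrightarrow> \<phi> (of_real t) \<in> \<real>" and "y \<in> U"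
  shows "deriv \<phi> (of_real y) \<in> \<real>"
proof -
  have "((\<lambda>t. Im (\<phi> (of_real t))) has_real_derivative Im (deriv \<phi> (of_real y))) (at y)"
    using bounded_linear.has_vector_derivative[OF bounded_linear_Im
        has_vector_derivative_of_real_holomorphic[OF assms(1,2)]] assms(4,6)
    by (auto simp: has_real_derivative_iff_has_vector_derivative)
  moreover have "((\<lambda>t. Im (\<phi> (of_real t))) has_real_derivative 0) (at y)"
    by (rule has_field_derivative_transform_within_open[OF DERIV_const \<open>open U\<close> \<open>y \<in> U\<close>])
       (use real_on_U in \<open>simp add: complex_is_Real_iff\<close>)
  ultimately show ?thesis
    by (simp add: complex_is_Real_iff DERIV_unique)
qed

lemma continuous_on_Re_restrict:
  assumes "continuous_on A \<phi>" "of_real ` S \<subseteq> A"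
  shows "continuous_on S (Re_restrict \<phi>)"
  unfolding Re_restrict_def
  by (intro continuous_intros continuous_on_compose2[OF assms(1)] assms(2))

locale inverse_branch =
  fixes T :: "real \<Rightarrow> real" and a b :: real and \<phi> :: "complex \<Rightarrow> complex" and R :: real
  assumes \<phi>_holo: "\<phi> holomorphic_on ball 0 R" and R_gt_1: "1 < R"
    and T_maps: "T ` {a<..<b} \<subseteq> {-1..1}"
    and T_onto: "{-1<..<1} \<subseteq> T ` {a<..<b}"
    and T_deriv_nonzero: "\<And>x. x \<in> {a<..<b} \<Longrightarrow> \<exists>D. (T has_real_derivative D) (at x) \<and> D \<noteq> 0"
    and \<phi>_left_inverse: "\<And>x. x \<in> {a<..<b} \<Longrightarrow> \<phi> (of_real (T x)) = of_real x"
begin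

lemma of_real_in_ball: "y \<in> {-1..1} \<Longrightarrow> complex_of_real y \<in> ball 0 R"
  using R_gt_1 by auto

lemma continuous_on_Re_restrict_branch:
  "continuous_on {-1..1} (Re_restrict \<phi>)" "continuous_on {-1..1} (Re_restrict (deriv \<phi>))"
  using of_real_in_ball
  by (auto intro!: continuous_on_Re_restrict holomorphic_on_imp_continuous_on
      holomorphic_deriv[OF \<phi>_holo open_ball] \<phi>_holo)

lemma Re_restrict_left_inverse: "x \<in> {a<..<b} \<Longrightarrow> Re_restrict \<phi> (T x) = x"
  by (simp add: Re_restrict_def \<phi>_left_inverse)

lemma \<phi>_of_real: "y \<in> {-1<..<1} \<Longrightarrow> \<phi> (of_real y) = of_real (Re_restrict \<phi> y)"
  using T_onto \<phi>_left_inverse by (auto simp: Re_restrict_def)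

lemma has_real_derivative_Re_restrict_branch:
  "y \<in> {-1..1} \<Longrightarrow> (Re_restrict \<phi> has_real_derivative Re_restrict (deriv \<phi>) y) (at y)"
  by (rule has_real_derivative_Re_restrict[OF \<phi>_holo open_ball of_real_in_ball])

lemma deriv_\<phi>_of_real:
  assumes "y \<in> {-1<..<1}"
  shows "deriv \<phi> (of_real y) = of_real (Re_restrict (deriv \<phi>) y)"
proof -
  have "deriv \<phi> (of_real y) \<in> \<real>"
    by (rule deriv_in_Reals_if_Reals_on_open[OF \<phi>_holo open_ball open_greaterThanLessThan _ _ assms])
       (use of_real_in_ball \<phi>_of_real in auto)
  then show ?thesis
    by (simp add: Re_restrict_def)
qed

lemma Re_restrict_deriv_nonzero:
  assumes "y \<in> {-1<..<1}"
  shows "Re_restrict (deriv \<phi>) y \<noteq> 0"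
proof -
  obtain x D where x: "x \<in> {a<..<b}" "y = T x" and D: "(T has_real_derivative D) (at x)"
    using T_onto assms T_deriv_nonzero by blast
  have "((\<lambda>x. Re_restrict \<phi> (T x)) has_real_derivative Re_restrict (deriv \<phi>) y * D) (at x)"
    using DERIV_chain2[OF has_real_derivative_Re_restrict_branch D] assms x(2) by auto
  moreover have "((\<lambda>x. Re_restrict \<phi> (T x)) has_real_derivative 1) (at x)"
    by (rule has_field_derivative_transform_within_open[OF DERIV_ident open_greaterThanLessThan x(1)])
       (simp add: Re_restrict_left_inverse)
  ultimately show ?thesis
    using DERIV_unique by force
qed

lemma sgn_deriv_mult_deriv_eq_abs:
  assumes "y \<in> {-1<..<1}"
  shows "sgn (deriv \<phi> 0) * deriv \<phi> (of_real y) = of_real \<bar>Re_restrict (deriv \<phi>) y\<bar>"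
proof -
  have "sgn (Re_restrict (deriv \<phi>) 0) = sgn (Re_restrict (deriv \<phi>) y)"
    by (rule sgn_eq_if_connected_nonzero[OF _ _ Re_restrict_deriv_nonzero _ assms])
       (auto intro: continuous_on_subset[OF continuous_on_Re_restrict_branch(2)])
  then show ?thesis
    using deriv_\<phi>_of_real[OF assms] deriv_\<phi>_of_real[of 0]
    by (simp add: sgn_of_real abs_sgn flip: of_real_mult)
qed

lemma has_integral_branch:
  assumes "continuous_on {-1..1} g" "continuous_on UNIV f"
  shows "((\<lambda>x. g (T x) * f x) has_integral
           integral {-1..1} (\<lambda>y. \<bar>Re_restrict (deriv \<phi>) y\<bar> * g y * f (Re_restrict \<phi> y))) {a..b}"
proof (rule has_integral_pullback_left_inverse[OF T_maps T_onto Re_restrict_left_inverse])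
  show "(Re_restrict \<phi> has_real_derivative Re_restrict (deriv \<phi>) y) (at y)" if "y \<in> {-1<..<1}" for y
    using that by (intro has_real_derivative_Re_restrict_branch) auto
  show "(\<lambda>y. \<bar>Re_restrict (deriv \<phi>) y\<bar> * g y * f (Re_restrict \<phi> y)) absolutely_integrable_on {-1..1}"
    by (intro absolutely_integrable_continuous_real continuous_intros continuous_on_Re_restrict_branch
        assms(1) continuous_on_compose2[OF assms(2)]) auto
qed

end

section \<open>Duality of the transfer operator\<close>

lemma holomorphic_on_transfer_op:
  assumes "\<And>l. l < d \<Longrightarrow> \<phi> l holomorphic_on A" "open A" "F holomorphic_on UNIV"
  shows "transfer_op d \<phi> F holomorphic_on A"
  unfolding transfer_op_def
  using assms holomorphic_on_compose[of "\<phi> _" A F] holomorphic_on_subset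
  by (intro holomorphic_intros holomorphic_deriv) (auto simp: o_def)

locale full_branch_map =
  fixes T :: "real \<Rightarrow> real" and d :: nat and I :: "nat \<Rightarrow> real set"
    and \<phi> :: "nat \<Rightarrow> complex \<Rightarrow> complex" and R :: real
  assumes T_maps: "T ` {-1..1} \<subseteq> {-1..1}"
    and I_closed: "\<And>l. l < d \<Longrightarrow> \<exists>a b. I l = {a..b}"
    and I_cover: "(\<Union>l<d. I l) = {-1..1}"
    and I_disj: "\<And>l m. l < d \<Longrightarrow> m < d \<Longrightarrow> l \<noteq> m \<Longrightarrow> interior (I l) \<inter> interior (I m) = {}"
    and T_diffeo: "\<And>l x. l < d \<Longrightarrow> x \<in> interior (I l) \<Longrightarrow>
                     \<exists>D. (T has_real_derivative D) (at x) \<and> D \<noteq> 0"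
    and T_full: "\<And>l. l < d \<Longrightarrow> closure (T ` I l) = {-1..1}"
    and R_gt_1: "1 < R"
    and \<phi>_holo: "\<And>l. l < d \<Longrightarrow> \<phi> l holomorphic_on ball 0 R"
    and \<phi>_inv: "\<And>l x. l < d \<Longrightarrow> x \<in> interior (I l) \<Longrightarrow>
                   \<phi> l (complex_of_real (T x)) = complex_of_real x"
begin

lemma inverse_branchI:
  assumes j: "j < d" and I_j: "I j = {a..b}"
  shows "inverse_branch T a b (\<phi> j) R"
proof
  show T_deriv: "\<exists>D. (T has_real_derivative D) (at x) \<and> D \<noteq> 0" if "x \<in> {a<..<b}" for x
    using T_diffeo[OF j] that by (simp add: I_j)
  have "isCont T x" if "x \<in> {a<..<b}" for x
    using T_deriv[OF that] DERIV_isCont by blast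
  then have "continuous_on {a<..<b} T"
    by (simp add: continuous_at_imp_continuous_on)
  then show "{-1<..<1} \<subseteq> T ` {a<..<b}"
    by (rule open_interval_subset_image_if_closure) (use T_full[OF j] I_j in simp)
  have "I j \<subseteq> {-1..1}"
    using I_cover j by blast
  then have "{a<..<b} \<subseteq> {-1..1}"
    using I_j by auto
  then show "T ` {a<..<b} \<subseteq> {-1..1}"
    using T_maps by blast
  show "\<phi> j (of_real (T x)) = of_real x" if "x \<in> {a<..<b}" for x
    using \<phi>_inv[OF j] that by (simp add: I_j)
qed (fact \<phi>_holo[OF j] R_gt_1)+

lemma has_integral_transfer_op:
  assumes g: "continuous_on {-1..1} g" and f: "continuous_on UNIV f"
    and F: "\<And>t. F (of_real t) = of_real (f t)"
  shows "((\<lambda>y. of_real (g y) * transfer_op d \<phi> F (of_real y)) has_integral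
           of_real (integral {-1..1} (\<lambda>x. g (T x) * f x))) {-1..1}"
proof -
  obtain a b where I_ab: "\<And>j. j < d \<Longrightarrow> I j = {a j..b j}"
    using I_closed by metis
  have branch: "inverse_branch T (a j) (b j) (\<phi> j) R" if "j < d" for j
    using inverse_branchI[OF that I_ab[OF that]] .
  define h where "h j = (\<lambda>y. \<bar>Re_restrict (deriv (\<phi> j)) y\<bar> * g y * f (Re_restrict (\<phi> j) y))" for j
  have "((\<lambda>x. g (T x) * f x) has_integral (\<Sum>j<d. integral {-1..1} (h j))) (\<Union>j<d. I j)"
  proof (rule has_integral_UN)
    show "((\<lambda>x. g (T x) * f x) has_integral integral {-1..1} (h j)) (I j)" if "j \<in> {..<d}" for j
      using inverse_branch.has_integral_branch[OF branch g f] that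
      by (simp add: h_def I_ab)
    show "pairwise (\<lambda>i j. negligible (I i \<inter> I j)) {..<d}"
      using I_disj I_ab negligible_Int_intervals_if_interiors_disjoint
      by (simp add: pairwise_def)
  qed simp
  then have "integral {-1..1} (\<lambda>x. g (T x) * f x) = (\<Sum>j<d. integral {-1..1} (h j))"
    unfolding I_cover by (rule integral_unique)
  moreover have "((\<lambda>y. \<Sum>j<d. h j y) has_integral (\<Sum>j<d. integral {-1..1} (h j))) {-1..1}"
  proof (intro has_integral_sum integrable_integral integrable_continuous_real)
    show "continuous_on {-1..1} (h j)" if "j \<in> {..<d}" for j
      using inverse_branch.continuous_on_Re_restrict_branch[OF branch] that
      unfolding h_def by (intro continuous_intros g continuous_on_compose2[OF f]) auto
  qed simp
  moreover have "of_real (\<Sum>j<d. h j y) = of_real (g y) * transfer_op d \<phi> F (of_real y)"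
    if "y \<in> {-1<..<1}" for y
    using inverse_branch.sgn_deriv_mult_deriv_eq_abs[OF branch that]
      inverse_branch.\<phi>_of_real[OF branch that]
    by (simp add: h_def transfer_op_def F sum_distrib_left mult_ac)
  ultimately show ?thesis
    by (intro has_integral_spike[of "{-1, 1}", OF _ _ has_integral_of_real]) auto
qed

lemma holomorphic_on_transfer_op_hardy_basis:
  assumes "0 < \<rho>"
  shows "transfer_op d \<phi> (hardy_basis \<rho> l) holomorphic_on ball 0 R"
  unfolding hardy_basis_def
  by (intro holomorphic_on_transfer_op \<phi>_holo) (use assms in \<open>auto intro!: holomorphic_intros\<close>)

lemma Lmat_eq_Taylor_coeff:
  assumes "0 < \<rho>" "\<rho> < R"
  shows "Lmat \<rho> d \<phi> n l = (deriv ^^ n) (transfer_op d \<phi> (hardy_basis \<rho> l)) 0 / fact n * of_real \<rho> ^ n"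
  unfolding Lmat_def
  by (rule hardy_inner_hardy_basis[OF holomorphic_on_transfer_op_hardy_basis assms]) fact

end

theorem lemma8:
  fixes T :: "real \<Rightarrow> real"
    and d :: nat
    and I :: "nat \<Rightarrow> real set"
    and \<phi> :: "nat \<Rightarrow> complex \<Rightarrow> complex"
    and r R \<rho> :: real
  assumes T_maps: "T ` {-1..1} \<subseteq> {-1..1}"
    and I_closed: "\<And>l. l < d \<Longrightarrow> \<exists>a b. I l = {a..b}"
    and I_cover: "(\<Union>l<d. I l) = {-1..1}"
    and I_disj: "\<And>l m. l < d \<Longrightarrow> m < d \<Longrightarrow> l \<noteq> m \<Longrightarrow> interior (I l) \<inter> interior (I m) = {}"
    and T_analytic: "\<And>l. l < d \<Longrightarrow> real_analytic_on T (interior (I l))"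
    and T_inj: "\<And>l. l < d \<Longrightarrow> inj_on T (interior (I l))"
    and T_diffeo: "\<And>l x. l < d \<Longrightarrow> x \<in> interior (I l) \<Longrightarrow>
                     \<exists>D. (T has_real_derivative D) (at x) \<and> D \<noteq> 0"
    and T_full: "\<And>l. l < d \<Longrightarrow> closure (T ` I l) = {-1..1}"
    and radii: "1 < r" "r < R" "r < \<rho>" "\<rho> < R"
    and \<phi>_holo: "\<And>l. l < d \<Longrightarrow> \<phi> l holomorphic_on ball 0 R"
    and \<phi>_bdd: "\<And>l. l < d \<Longrightarrow> bounded (\<phi> l ` ball 0 R)"
    and \<phi>_into: "(\<Union>l<d. \<phi> l ` ball 0 R) \<subseteq> ball 0 r"
    and \<phi>_inv: "\<And>l x. l < d \<Longrightarrow> x \<in> interior (I l) \<Longrightarrow>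
                   \<phi> l (complex_of_real (T x)) = complex_of_real x"
  shows "(\<lambda>n. complex_of_real (Hmat k n) * complex_of_real (\<rho> powi (- int n)) * Lmat \<rho> d \<phi> n l
               * complex_of_real (\<rho> ^ l))
         sums complex_of_real (Gmat T k l)"
proof -
  interpret full_branch_map T d I \<phi> R
    using T_maps I_closed I_cover I_disj T_diffeo T_full radii \<phi>_holo \<phi>_inv
    by unfold_locales auto
  have \<rho>: "0 < \<rho>" "\<rho> < R" and R: "1 < R"
    using radii by auto
  define f where "f = transfer_op d \<phi> (hardy_basis \<rho> l)"
  define c where "c n = (deriv ^^ n) f 0 / fact n" for n
  have duality: "((\<lambda>y. of_real (y ^ k) * f (of_real y)) has_integral
          of_real (integral {-1..1} (\<lambda>x. T x ^ k * (x / \<rho>) ^ l))) {-1..1}"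
    unfolding f_def
    by (rule has_integral_transfer_op)
       (use \<rho> in \<open>auto simp: hardy_basis_def power_divide intro!: continuous_intros\<close>)
  have series: "(\<lambda>n. c n * of_real (integral {-1..1} (\<lambda>x. x ^ k * x ^ n))) sums
          of_real (integral {-1..1} (\<lambda>x. T x ^ k * (x / \<rho>) ^ l))"
    using sums_integral_power_series[OF holomorphic_on_transfer_op_hardy_basis[OF \<rho>(1), where l=l] R,
        OF continuous_on_power[OF continuous_on_id, where n=k]]
    unfolding f_def[symmetric] integral_unique[OF duality] c_def .
  have terms: "complex_of_real (Hmat k n) * complex_of_real (\<rho> powi (- int n)) * Lmat \<rho> d \<phi> n l
      * complex_of_real (\<rho> ^ l) = c n * of_real (integral {-1..1} (\<lambda>x. x ^ k * x ^ n)) * of_real (\<rho> ^ l / 2)"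
    for n
    using \<rho> by (simp add: Lmat_eq_Taylor_coeff f_def[symmetric] c_def Hmat_def power_int_minus field_simps)
  have "(\<lambda>x. T x ^ k * x ^ l) = (\<lambda>x. T x ^ k * (x / \<rho>) ^ l * \<rho> ^ l)"
    using \<rho> by (simp add: power_divide)
  then have G: "of_real (integral {-1..1} (\<lambda>x. T x ^ k * (x / \<rho>) ^ l)) * of_real (\<rho> ^ l / 2)
      = complex_of_real (Gmat T k l)"
    by (simp add: Gmat_def)
  show ?thesis
    unfolding terms G[symmetric] by (rule sums_mult2[OF series])
qed
end
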